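(* For every $t\ge0$, every $n\ge1$ and every $\mathfrak{t}_n\in\mathbb{T}(n)$, $p_n(\mathfrak{t}_n)=\mathsf{P}_t[\tau_n=\mathfrak{t}_n]$.
   Context: McKean trees: $\mathbb{T}(1)=\{\mathfrak{t}_1\}$ (a single leaf) and for $n\ge2$, $\mathbb{T}(n)=\bigcup_{k=1}^{n-1}\mathbb{T}(k)\times\mathbb{T}(n-k)$; a tree $\mathfrak{t}_n=(\mathfrak{t}^l_n,\mathfrak{t}^r_n)$ has left subtree with $n_l$ leaves and right subtree with $n_r=n-n_l$ leaves, leaves numbered left to right. The germination $\mathfrak{t}_{n,k}\in\mathbb{T}(n+1)$, $k=1,\dots,n$, is obtained by replacing the $k$-th leaf of $\mathfrak{t}_n$ by the two-leaved tree $\mathfrak{t}_2=(\mathfrak{t}_1,\mathfrak{t}_1)$. Weights: $p_1(\mathfrak{t}_1)=1$ and $p_n(\mathfrak{t}_n)=\frac{1}{n-1}p_{n_l}(\mathfrak{t}^l_n)p_{n_r}(\mathfrak{t}^r_n)$ for $n\ge2$. $(\tau_n)_{n\ge1}$ is a random sequence, defined on a probability space with probability $\mathsf{P}_t$, with $\tau_n\in\mathbb{T}(n)$, which is Markov with $\mathsf{P}_t[\tau_1=\mathfrak{t}_1]=1$, $\mathsf{P}_t[\tau_{n+1}=\mathfrak{t}_{n,k}\mid\tau_n=\mathfrak{t}_n]=1/n$ for $k=1,\dots,n$, and $\mathsf{P}_t[\tau_{n+1}=\mathfrak{s}\mid\tau_n=\mathfrak{t}_n]=0$ if $\mathfrak{s}$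 is not a germination of $\mathfrak{t}_n$. *)

theory Defs
  imports "HOL-Probability.Probability"
begin

datatype mtree = Leaf | Node mtree mtree

fun leaves :: "mtree \<Rightarrow> nat" where
  "leaves Leaf = 1"
| "leaves (Node l r) = leaves l + leaves r"

definition McKean_trees :: "nat \<Rightarrow> mtree set" where
  "McKean_trees n = {t. leaves t = n}"

text \<open>Germination: replace the k-th leaf (leaves numbered 1.. left to right) by a two-leaved tree.\<close>

fun germ :: "mtree \<Rightarrow> nat \<Rightarrow> mtree" where
  "germ Leaf k = Node Leaf Leaf"
| "germ (Node l r) k =
     (if k \<le> leaves l then Node (germ l k) r else Node l (germ r (k - leaves l)))"

text \<open>Weights p_n (the index n is the number of leaves of the argument).\<close>

fun pw :: "mtree \<Rightarrow> real" where
  "pw Leaf = 1"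
| "pw (Node l r) = (1 / (real (leaves l + leaves r) - 1)) * pw l * pw r"

end

theory Submission
  imports Defs "HOL-Library.Countable"
begin

text \<open>Given \<open>\<tau>\<^sub>n\<close>, the tree \<open>\<tau>\<^sub>n\<^sub>+\<^sub>1\<close> is the germination of \<open>\<tau>\<^sub>n\<close> at a uniformly chosen
  leaf, so by total probability \<open>P[\<tau>\<^sub>n\<^sub>+\<^sub>1 = u] = (1/n) \<Sum> P[\<tau>\<^sub>n = s]\<close>, summed over the
  parents \<open>s\<close> of \<open>u\<close> (the trees of which \<open>u\<close> is a germination). The weights satisfy the same
  recursion, \<open>\<Sum> p(s) = (|u| - 1) p(u)\<close>: a parent of \<open>(l, r)\<close> replaces \<open>l\<close> or \<open>r\<close> by one of
  its parents, which turns the root factor \<open>1/(|u| - 1)\<close> of \<open>p\<close> into \<open>1/(|u| - 2)\<close>, and the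
  identity follows by structural induction.\<close>

instance mtree :: countable by countable_datatype

lemma leaves_pos: "leaves s \<ge> 1"
  by (induction s) auto

lemma leaves_eq_1_iff: "leaves s = 1 \<longleftrightarrow> s = Leaf"
proof (cases s)
  case (Node l r)
  then show ?thesis using leaves_pos[of l] leaves_pos[of r] by simp
qed simp

lemma leaves_germ: "leaves (germ s k) = Suc (leaves s)"
  by (induction s arbitrary: k) auto

lemma germ_neq_Leaf: "germ s k \<noteq> Leaf"
  by (cases s) auto

definition germ_parents :: "mtree \<Rightarrow> mtree set" where
  "germ_parents t = {s. \<exists>k\<in>{1..leaves s}. germ s k = t}"

lemma leaves_germ_parents: "s \<in> germ_parents t \<Longrightarrow> Suc (leaves s) = leaves t"
  by (auto simp: germ_parents_def leaves_germ)

lemma germ_parents_Leaf: "germ_parents Leaf = {}"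
  by (simp add: germ_parents_def germ_neq_Leaf)

lemma Node_left_in_germ_parents: "a \<in> germ_parents l \<Longrightarrow> Node a r \<in> germ_parents (Node l r)"
  by (auto simp: germ_parents_def intro!: bexI)

lemma Node_right_in_germ_parents:
  assumes "b \<in> germ_parents r" shows "Node l b \<in> germ_parents (Node l r)"
proof -
  from assms obtain k where "k \<in> {1..leaves b}" "germ b k = r"
    by (auto simp: germ_parents_def)
  then show ?thesis
    by (auto simp: germ_parents_def intro!: bexI[where x="k + leaves l"])
qed

lemma germ_parents_Node:
  "germ_parents (Node l r) =
     (if l = Leaf \<and> r = Leaf then {Leaf}
      else (\<lambda>a. Node a r) ` germ_parents l \<union> Node l ` germ_parents r)"
proof (cases "l = Leaf \<and> r = Leaf")
  case True
  then show ?thesis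
    by (auto simp: germ_parents_def germ_neq_Leaf germ_neq_Leaf[symmetric] split: if_splits elim!: germ.elims)
next
  case False
  have "s \<in> (\<lambda>a. Node a r) ` germ_parents l \<union> Node l ` germ_parents r"
    if "s \<in> germ_parents (Node l r)" for s
  proof -
    from that obtain k where k: "k \<in> {1..leaves s}" "germ s k = Node l r"
      by (auto simp: germ_parents_def)
    with False obtain a b where s: "s = Node a b"
      by (cases s) auto
    show ?thesis
    proof (cases "k \<le> leaves a")
      case True
      with k s have "a \<in> germ_parents l" "s = Node a r"
        by (auto simp: germ_parents_def)
      then show ?thesis by simp
    next
      case False
      with k s have "b \<in> germ_parents r" "s = Node l b"
        by (auto simp: germ_parents_def intro!: bexI[where x="k - leaves a"])
      then show ?thesis by simp
    qed
  qed
  with False show ?thesis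
    by (auto intro: Node_left_in_germ_parents Node_right_in_germ_parents)
qed

lemma finite_germ_parents: "finite (germ_parents t)"
  by (induction t) (simp_all add: germ_parents_Leaf germ_parents_Node)

lemma sum_germ_parents_Node:
  assumes "\<not> (l = Leaf \<and> r = Leaf)"
  shows "(\<Sum>s\<in>germ_parents (Node l r). f s)
    = (\<Sum>a\<in>germ_parents l. f (Node a r)) + (\<Sum>b\<in>germ_parents r. f (Node l b))"
proof -
  have "(\<lambda>a. Node a r) ` germ_parents l \<inter> Node l ` germ_parents r = {}"
    using leaves_germ_parents[of l l] by auto
  then show ?thesis
    by (simp add: germ_parents_Node assms sum.union_disjoint finite_germ_parents sum.reindex inj_on_def)
qed

lemma sum_pw_germ_parents: "(\<Sum>s\<in>germ_parents t. pw s) = (real (leaves t) - 1) * pw t"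
proof (induction t)
  case Leaf
  show ?case by (simp add: germ_parents_Leaf)
next
  case (Node l r)
  show ?case
  proof (cases "l = Leaf \<and> r = Leaf")
    case True
    then show ?thesis by (simp add: germ_parents_Node)
  next
    case False
    define L where "L = real (leaves l + leaves r)"
    have "L > 2"
      using False leaves_pos[of l] leaves_pos[of r] leaves_eq_1_iff[of l] leaves_eq_1_iff[of r]
      unfolding L_def by linarith
    have pw_left: "pw (Node a r) = pw a * (pw r / (L - 2))" if "a \<in> germ_parents l" for a
      using leaves_germ_parents[OF that] unfolding L_def by simp
    have pw_right: "pw (Node l b) = pw b * (pw l / (L - 2))" if "b \<in> germ_parents r" for b
      using leaves_germ_parents[OF that, symmetric] unfolding L_def by (simp add: mult.commute)
    have "(\<Sum>s\<in>germ_parents (Node l r). pw s)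
        = (\<Sum>a\<in>germ_parents l. pw (Node a r)) + (\<Sum>b\<in>germ_parents r. pw (Node l b))"
      using False by (rule sum_germ_parents_Node)
    also have "\<dots> = (\<Sum>a\<in>germ_parents l. pw a) * (pw r / (L - 2))
                   + (\<Sum>b\<in>germ_parents r. pw b) * (pw l / (L - 2))"
      by (simp only: sum.cong[OF refl pw_left] sum.cong[OF refl pw_right] sum_distrib_right)
    also have "\<dots> = (real (leaves l) - 1) * pw l * (pw r / (L - 2))
                   + (real (leaves r) - 1) * pw r * (pw l / (L - 2))"
      by (simp only: Node.IH)
    also have "\<dots> = pw l * pw r * ((real (leaves l) - 1) + (real (leaves r) - 1)) / (L - 2)"
      by (simp add: add_divide_distrib[symmetric] algebra_simps)
    also have "\<dots> = pw l * pw r"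
      using \<open>L > 2\<close> unfolding L_def by simp
    also have "\<dots> = (real (leaves (Node l r)) - 1) * pw (Node l r)"
      using \<open>L > 2\<close> unfolding L_def by simp
    finally show ?thesis .
  qed
qed

lemma (in prob_space) prob_eq_sum_cond_prob:
  assumes X_events: "\<And>a. {\<omega> \<in> space M. X \<omega> = a} \<in> events"
    and Y_event: "{\<omega> \<in> space M. Y \<omega> = y} \<in> events"
    and X_range: "\<And>\<omega>. \<omega> \<in> space M \<Longrightarrow> X \<omega> \<in> A"
    and "countable A" and "finite F"
    and transition: "\<And>a. a \<in> F \<Longrightarrow> \<P>(\<omega> in M. X \<omega> = a) > 0 \<Longrightarrow>
        \<P>(\<omega> in M. Y \<omega> = y \<and> X \<omega> = a) / \<P>(\<omega> in M. X \<omega> = a) = c a"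
    and no_transition: "\<And>a. a \<in> A - F \<Longrightarrow> \<P>(\<omega> in M. X \<omega> = a) > 0 \<Longrightarrow>
        \<P>(\<omega> in M. Y \<omega> = y \<and> X \<omega> = a) / \<P>(\<omega> in M. X \<omega> = a) = 0"
  shows "\<P>(\<omega> in M. Y \<omega> = y) = (\<Sum>a\<in>F. \<P>(\<omega> in M. X \<omega> = a) * c a)"
proof -
  have joint_event: "{\<omega> \<in> space M. Y \<omega> = y \<and> X \<omega> = a} \<in> events" for a
    by (intro sets.sets_Collect_conj Y_event X_events)
  have joint_null: "\<P>(\<omega> in M. Y \<omega> = y \<and> X \<omega> = a) = 0" if "\<P>(\<omega> in M. X \<omega> = a) = 0" for a
  proof -
    have "\<P>(\<omega> in M. Y \<omega> = y \<and> X \<omega> = a) \<le> \<P>(\<omega> in M. X \<omega> = a)"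
      by (intro finite_measure_mono X_events) auto
    with that show ?thesis by (simp add: measure_le_0_iff)
  qed
  have pos_or_0: "\<P>(\<omega> in M. X \<omega> = a) > 0 \<or> \<P>(\<omega> in M. X \<omega> = a) = 0" for a
    using measure_nonneg[of M "{\<omega> \<in> space M. X \<omega> = a}"] by linarith
  have joint: "\<P>(\<omega> in M. Y \<omega> = y \<and> X \<omega> = a) = \<P>(\<omega> in M. X \<omega> = a) * c a" if "a \<in> F" for a
    using pos_or_0[of a] joint_null[of a] transition[OF that] by (auto simp: divide_eq_eq)
  have "\<P>(\<omega> in M. Y \<omega> = y \<and> X \<omega> = a) = 0" if "a \<in> A - F" for a
    using pos_or_0[of a] joint_null[of a] no_transition[OF that] by auto
  then have "\<forall>a\<in>A - F. AE \<omega> in M. \<not> (Y \<omega> = y \<and> X \<omega> = a)"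
    using prob_Collect_eq_0[OF joint_event] by blast
  then have "AE \<omega> in M. \<forall>a\<in>A - F. \<not> (Y \<omega> = y \<and> X \<omega> = a)"
    using \<open>countable A\<close> by (subst AE_ball_countable) auto
  then have "AE \<omega> in M. Y \<omega> = y \<longrightarrow> X \<omega> \<in> F"
    using AE_space by eventually_elim (use X_range in blast)
  then have "\<P>(\<omega> in M. Y \<omega> = y) = (\<Sum>a\<in>F. \<P>(\<omega> in M. Y \<omega> = y \<and> X \<omega> = a))"
    by (intro prob_sum \<open>finite F\<close> joint_event Y_event) (auto elim!: AE_mp)
  also have "\<dots> = (\<Sum>a\<in>F. \<P>(\<omega> in M. X \<omega> = a) * c a)"
    using joint by simp
  finally show ?thesis .
qed

lemma (in prob_space) prob_germination_step:
  fixes X Y :: "'a \<Rightarrow> mtree"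
  assumes X_events: "\<And>s. {\<omega> \<in> space M. X \<omega> = s} \<in> events"
    and Y_event: "{\<omega> \<in> space M. Y \<omega> = u} \<in> events"
    and X_range: "\<And>\<omega>. \<omega> \<in> space M \<Longrightarrow> X \<omega> \<in> McKean_trees n"
    and germ: "\<And>s k. s \<in> McKean_trees n \<Longrightarrow> \<P>(\<omega> in M. X \<omega> = s) > 0 \<Longrightarrow> k \<in> {1..n} \<Longrightarrow>
        \<P>(\<omega> in M. Y \<omega> = germ s k \<and> X \<omega> = s) / \<P>(\<omega> in M. X \<omega> = s) = 1 / real n"
    and other: "\<And>s. s \<in> McKean_trees n \<Longrightarrow> \<P>(\<omega> in M. X \<omega> = s) > 0 \<Longrightarrow> u \<notin> germ s ` {1..n} \<Longrightarrow>
        \<P>(\<omega> in M. Y \<omega> = u \<and> X \<omega> = s) / \<P>(\<omega> in M. X \<omega> = s) = 0"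
  shows "\<P>(\<omega> in M. Y \<omega> = u) = (\<Sum>s\<in>germ_parents u. \<P>(\<omega> in M. X \<omega> = s)) / real n"
proof -
  have "\<P>(\<omega> in M. Y \<omega> = u) = (\<Sum>s\<in>germ_parents u. \<P>(\<omega> in M. X \<omega> = s) * (1 / real n))"
  proof (rule prob_eq_sum_cond_prob[where A = "McKean_trees n"])
    show "\<P>(\<omega> in M. Y \<omega> = u \<and> X \<omega> = s) / \<P>(\<omega> in M. X \<omega> = s) = 1 / real n"
      if "s \<in> germ_parents u" "\<P>(\<omega> in M. X \<omega> = s) > 0" for s
    proof -
      from that(2) have "{\<omega> \<in> space M. X \<omega> = s} \<noteq> {}"
        by (metis less_irrefl measure_empty)
      then obtain \<omega> where "\<omega> \<in> space M" "X \<omega> = s"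
        by blast
      with X_range have "leaves s = n"
        by (auto simp: McKean_trees_def)
      moreover from that(1) obtain k where "k \<in> {1..leaves s}" "germ s k = u"
        by (auto simp: germ_parents_def)
      ultimately show ?thesis
        using germ[OF _ that(2)] by (auto simp: McKean_trees_def)
    qed
    show "\<P>(\<omega> in M. Y \<omega> = u \<and> X \<omega> = s) / \<P>(\<omega> in M. X \<omega> = s) = 0"
      if "s \<in> McKean_trees n - germ_parents u" "\<P>(\<omega> in M. X \<omega> = s) > 0" for s
    proof -
      from that(1) have "u \<notin> germ s ` {1..n}"
        by (auto simp: McKean_trees_def germ_parents_def)
      with other that show ?thesis by blast
    qed
  qed (use X_events Y_event X_range finite_germ_parents in \<open>auto intro: countableI_type\<close>)
  then show ?thesis by (simp add: sum_divide_distrib)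
qed

theorem lemma3:
  fixes P :: "real \<Rightarrow> 'a measure"
    and \<tau> :: "nat \<Rightarrow> 'a \<Rightarrow> mtree"
  assumes prob: "\<And>t. t \<ge> 0 \<Longrightarrow> prob_space (P t)"
    and meas: "\<And>t n s. t \<ge> 0 \<Longrightarrow> {\<omega> \<in> space (P t). \<tau> n \<omega> = s} \<in> sets (P t)"
    and in_T: "\<And>t n \<omega>. t \<ge> 0 \<Longrightarrow> n \<ge> 1 \<Longrightarrow> \<omega> \<in> space (P t) \<Longrightarrow> \<tau> n \<omega> \<in> McKean_trees n"
    and init: "\<And>t. t \<ge> 0 \<Longrightarrow> measure (P t) {\<omega> \<in> space (P t). \<tau> 1 \<omega> = Leaf} = 1"
    and step_germ: "\<And>t n s k. t \<ge> 0 \<Longrightarrow> n \<ge> 1 \<Longrightarrow> s \<in> McKean_trees n \<Longrightarrow>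
        measure (P t) {\<omega> \<in> space (P t). \<tau> n \<omega> = s} > 0 \<Longrightarrow> k \<in> {1..n} \<Longrightarrow>
        measure (P t) {\<omega> \<in> space (P t). \<tau> (Suc n) \<omega> = germ s k \<and> \<tau> n \<omega> = s}
          / measure (P t) {\<omega> \<in> space (P t). \<tau> n \<omega> = s} = 1 / real n"
    and step_other: "\<And>t n s u. t \<ge> 0 \<Longrightarrow> n \<ge> 1 \<Longrightarrow> s \<in> McKean_trees n \<Longrightarrow>
        measure (P t) {\<omega> \<in> space (P t). \<tau> n \<omega> = s} > 0 \<Longrightarrow> u \<notin> germ s ` {1..n} \<Longrightarrow>
        measure (P t) {\<omega> \<in> space (P t). \<tau> (Suc n) \<omega> = u \<and> \<tau> n \<omega> = s}
          / measure (P t) {\<omega> \<in> space (P t). \<tau> n \<omega> = s} = 0"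
  shows "\<forall>t\<ge>0. \<forall>n\<ge>1. \<forall>s\<in>McKean_trees n.
           pw s = measure (P t) {\<omega> \<in> space (P t). \<tau> n \<omega> = s}"
proof (intro allI impI ballI)
  fix t :: real and n s
  assume t: "t \<ge> 0" and "n \<ge> 1" and "s \<in> McKean_trees n"
  interpret prob_space "P t" using prob[OF t] .
  have "pw s = \<P>(\<omega> in P t. \<tau> n \<omega> = s)" if "n \<ge> 1" "leaves s = n" for n s
    using that
  proof (induction n arbitrary: s rule: nat_induct_at_least)
    case base
    then have "s = Leaf" by (simp only: leaves_eq_1_iff)
    with init[OF t] show ?case by simp
  next
    case (Suc n u)
    have "\<P>(\<omega> in P t. \<tau> (Suc n) \<omega> = u) = (\<Sum>s\<in>germ_parents u. \<P>(\<omega> in P t. \<tau> n \<omega> = s)) / real n"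
      by (rule prob_germination_step) (use Suc.hyps meas in_T step_germ step_other t in auto)
    also have "\<dots> = (\<Sum>s\<in>germ_parents u. pw s) / real n"
      using Suc.IH leaves_germ_parents[of _ u] Suc.prems by (simp cong: sum.cong)
    also have "\<dots> = pw u"
      using Suc.hyps Suc.prems by (simp add: sum_pw_germ_parents)
    finally show ?case ..
  qed
  with \<open>n \<ge> 1\<close> \<open>s \<in> McKean_trees n\<close> show "pw s = \<P>(\<omega> in P t. \<tau> n \<omega> = s)"
    by (simp add: McKean_trees_def)
qed

end
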